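(* Let $\eta=i\pi Q/P$ with positive integers $Q<P$, let $\kappa\in\mathbb{C}$, $n\ge P$, and let $\lambda_1,\dots,\lambda_n,\mu_1,\dots,\mu_n\in\mathbb{C}$ be such that all entries of $\Omega_\kappa(\{\lambda\},\{\mu\}|\{\lambda\})$ are finite. Suppose there are distinct indices $a_1,\dots,a_P$ with $\sinh(\lambda_{a_{j+1}}-\lambda_{a_j}+\eta)=0$ for $j=1,\dots,P$, where $a_{P+1}:=a_1$. Then $\det_n\Omega_\kappa(\{\lambda\},\{\mu\}|\{\lambda\})=0$.
   Context: $\xi_1,\dots,\xi_M\in\mathbb{C}$ are fixed; $a(\lambda)=\prod_{j=1}^M\sinh(\lambda-\xi_j+\eta)$, $d(\lambda)=\prod_{j=1}^M\sinh(\lambda-\xi_j)$, $t(\lambda,\mu)=\frac{\sinh\eta}{\sinh(\lambda-\mu)\sinh(\lambda-\mu+\eta)}$. For sets $\{\lambda_1..\lambda_n\}$, $\{\mu_1..\mu_n\}$, $\{\nu_1..\nu_{n'}\}$, $\Omega_\kappa(\{\lambda\},\{\mu\}|\{\nu\})$ is the $n\times n$ matrix with entries $(\Omega_\kappa)_{jk}=a(\mu_k)t(\lambda_j,\mu_k)\prod_{c=1}^{n'}\sinh(\nu_c-\mu_k+\eta)-\kappa\,d(\mu_k)t(\mu_k,\lambda_j)\prod_{c=1}^{n'}\sinh(\nu_c-\mu_k-\eta)$. *)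

theory Defs
  imports Complex_Main "Jordan_Normal_Form.Determinant"
begin

definition a_fun :: "complex \<Rightarrow> nat \<Rightarrow> (nat \<Rightarrow> complex) \<Rightarrow> complex \<Rightarrow> complex" where
  "a_fun \<eta> M \<xi> x = (\<Prod>j<M. sinh (x - \<xi> j + \<eta>))"

definition d_fun :: "nat \<Rightarrow> (nat \<Rightarrow> complex) \<Rightarrow> complex \<Rightarrow> complex" where
  "d_fun M \<xi> x = (\<Prod>j<M. sinh (x - \<xi> j))"

definition t_fun :: "complex \<Rightarrow> complex \<Rightarrow> complex \<Rightarrow> complex" where
  "t_fun \<eta> x y = sinh \<eta> / (sinh (x - y) * sinh (x - y + \<eta>))"

text \<open>The n x n matrix Omega_kappa({lambda},{mu}|{nu}), nu of size n', all indices 0-based.\<close>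

definition Omega :: "complex \<Rightarrow> nat \<Rightarrow> (nat \<Rightarrow> complex) \<Rightarrow> complex \<Rightarrow> nat \<Rightarrow>
    (nat \<Rightarrow> complex) \<Rightarrow> (nat \<Rightarrow> complex) \<Rightarrow> nat \<Rightarrow> (nat \<Rightarrow> complex) \<Rightarrow> complex mat" where
  "Omega \<eta> M \<xi> \<kappa> n lam \<mu> n' \<nu> = mat n n (\<lambda>(j, k).
      a_fun \<eta> M \<xi> (\<mu> k) * t_fun \<eta> (lam j) (\<mu> k) * (\<Prod>c<n'. sinh (\<nu> c - \<mu> k + \<eta>))
    - \<kappa> * d_fun M \<xi> (\<mu> k) * t_fun \<eta> (\<mu> k) (lam j) * (\<Prod>c<n'. sinh (\<nu> c - \<mu> k - \<eta>)))"

text \<open>All entries finite: no denominator of the t-factors vanishes.\<close>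

definition Omega_entries_finite :: "complex \<Rightarrow> nat \<Rightarrow> (nat \<Rightarrow> complex) \<Rightarrow> (nat \<Rightarrow> complex) \<Rightarrow> bool" where
  "Omega_entries_finite \<eta> n lam \<mu> \<longleftrightarrow>
     (\<forall>j<n. \<forall>k<n. sinh (lam j - \<mu> k) \<noteq> 0 \<and> sinh (lam j - \<mu> k + \<eta>) \<noteq> 0
                  \<and> sinh (\<mu> k - lam j) \<noteq> 0 \<and> sinh (\<mu> k - lam j + \<eta>) \<noteq> 0)"

end

theory Submission
  imports Defs
begin

text \<open>
  Since \<open>t(x, y) = coth (x - y) - coth (x - y + \<eta>)\<close> and \<open>coth\<close> is invariant under shifts \<open>w\<close>
  with \<open>sinh w = 0\<close>, the cycle condition turns both \<open>\<Sum>\<^sub>j t(\<lambda>\<^sub>a\<^sub>j, \<mu>)\<close> and \<open>\<Sum>\<^sub>j t(\<mu>, \<lambda>\<^sub>a\<^sub>j)\<close>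
  into telescoping sums around the cycle, which vanish. Hence the rows \<open>a\<^sub>1, \<dots>, a\<^sub>P\<close> of
  \<open>\<Omega>\<^sub>\<kappa>\<close> add up to zero. The value \<open>\<eta> = i\<pi>Q/P\<close> is never used: it only makes the cycle
  condition satisfiable, since summing it around the cycle forces \<open>P\<eta> \<in> i\<pi>\<int>\<close>.
\<close>

definition coth :: "complex \<Rightarrow> complex" where
  "coth z = cosh z / sinh z"

lemma t_fun_eq_coth_diff:
  assumes "sinh (x - y) \<noteq> 0" and "sinh (x - y + \<eta>) \<noteq> 0"
  shows "t_fun \<eta> x y = coth (x - y) - coth (x - y + \<eta>)"
proof -
  define u where "u = x - y"
  have "cosh u * sinh (u + \<eta>) - cosh (u + \<eta>) * sinh u = sinh \<eta> * (cosh u ^ 2 - sinh u ^ 2)"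
    by (simp add: sinh_add cosh_add power2_eq_square algebra_simps)
  also have "\<dots> = sinh \<eta>"
    by (simp add: cosh_square_eq)
  finally have "cosh u * sinh (u + \<eta>) - cosh (u + \<eta>) * sinh u = sinh \<eta>" .
  with assms show ?thesis
    unfolding t_fun_def coth_def u_def[symmetric] by (simp add: field_simps)
qed

lemma coth_add_sinh_zero:
  assumes "sinh w = 0"
  shows "coth (z + w) = coth z"
proof -
  have "cosh w ^ 2 = 1"
    using cosh_square_eq[of w] assms by simp
  then have "cosh w \<noteq> 0"
    by auto
  with assms show ?thesis
    unfolding coth_def by (simp add: sinh_add cosh_add)
qed

lemma sum_lessThan_rotate:
  fixes g :: "nat \<Rightarrow> 'a::comm_monoid_add"
  assumes "0 < P"
  shows "(\<Sum>j<P. g (Suc j mod P)) = (\<Sum>j<P. g j)"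
proof -
  obtain m where P: "P = Suc m"
    using assms gr0_conv_Suc by blast
  have "(\<Sum>j<Suc m. g (Suc j mod Suc m)) = (\<Sum>j<m. g (Suc j)) + g 0"
    by (simp add: sum.lessThan_Suc)
  also have "\<dots> = (\<Sum>j<Suc m. g j)"
    by (metis add.commute sum.lessThan_Suc_shift)
  finally show ?thesis
    unfolding P .
qed

lemma sum_t_fun_cycle_left:
  assumes "0 < P"
    and cycle: "\<And>j. j < P \<Longrightarrow> sinh (x (Suc j mod P) - x j + \<eta>) = 0"
    and nonzero: "\<And>j. j < P \<Longrightarrow> sinh (x j - m) \<noteq> 0 \<and> sinh (x j - m + \<eta>) \<noteq> 0"
  shows "(\<Sum>j<P. t_fun \<eta> (x j) m) = 0"
proof -
  have "t_fun \<eta> (x (Suc j mod P)) m = coth (x (Suc j mod P) - m) - coth (x j - m)"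
    if "j < P" for j
  proof -
    have "coth (x (Suc j mod P) - m + \<eta>) = coth ((x j - m) + (x (Suc j mod P) - x j + \<eta>))"
      by (rule arg_cong[where f = coth]) simp
    also have "\<dots> = coth (x j - m)"
      by (rule coth_add_sinh_zero[OF cycle[OF that]])
    finally have "coth (x (Suc j mod P) - m + \<eta>) = coth (x j - m)" .
    with t_fun_eq_coth_diff nonzero[of "Suc j mod P"] \<open>0 < P\<close> show ?thesis
      by simp
  qed
  then show ?thesis
    using sum_lessThan_rotate[OF \<open>0 < P\<close>, of "\<lambda>j. t_fun \<eta> (x j) m"]
      sum_lessThan_rotate[OF \<open>0 < P\<close>, of "\<lambda>j. coth (x j - m)"]
    by (simp add: sum_subtractf)
qed

lemma sum_t_fun_cycle_right:
  assumes "0 < P"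
    and cycle: "\<And>j. j < P \<Longrightarrow> sinh (x (Suc j mod P) - x j + \<eta>) = 0"
    and nonzero: "\<And>j. j < P \<Longrightarrow> sinh (m - x j) \<noteq> 0 \<and> sinh (m - x j + \<eta>) \<noteq> 0"
  shows "(\<Sum>j<P. t_fun \<eta> m (x j)) = 0"
proof -
  have "t_fun \<eta> m (x j) = coth (m - x j) - coth (m - x (Suc j mod P))"
    if "j < P" for j
  proof -
    have "coth (m - x j + \<eta>) = coth ((m - x (Suc j mod P)) + (x (Suc j mod P) - x j + \<eta>))"
      by (rule arg_cong[where f = coth]) simp
    also have "\<dots> = coth (m - x (Suc j mod P))"
      by (rule coth_add_sinh_zero[OF cycle[OF that]])
    finally have "coth (m - x j + \<eta>) = coth (m - x (Suc j mod P))" .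
    with t_fun_eq_coth_diff nonzero[OF that] show ?thesis
      by simp
  qed
  then show ?thesis
    using sum_lessThan_rotate[OF \<open>0 < P\<close>, of "\<lambda>j. coth (m - x j)"]
    by (simp add: sum_subtractf)
qed

lemma det_zero_if_rows_sum_zero:
  fixes A :: "'a::idom mat"
  assumes A: "A \<in> carrier_mat n n"
    and S: "S \<subseteq> {..<n}" "S \<noteq> {}"
    and rows_sum: "\<And>k. k < n \<Longrightarrow> (\<Sum>i\<in>S. A $$ (i, k)) = 0"
  shows "det A = 0"
proof -
  define v where "v = vec n (\<lambda>i. if i \<in> S then 1 else 0 :: 'a)"
  have "v \<noteq> 0\<^sub>v n"
  proof
    assume "v = 0\<^sub>v n"
    obtain i where "i \<in> S"
      using S(2) by blast
    with S(1) have "v $ i = 1"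
      unfolding v_def by auto
    with S(1) \<open>i \<in> S\<close> \<open>v = 0\<^sub>v n\<close> show False
      by auto
  qed
  moreover have "transpose_mat A *\<^sub>v v = 0\<^sub>v n"
  proof (rule eq_vecI)
    fix k
    assume "k < dim_vec (0\<^sub>v n)"
    then have "k < n"
      by simp
    have "(transpose_mat A *\<^sub>v v) $ k = (\<Sum>i<n. if i \<in> S then A $$ (i, k) else 0)"
      using A \<open>k < n\<close> unfolding v_def
      by (auto simp: scalar_prod_def lessThan_atLeast0 intro: sum.cong)
    also have "\<dots> = 0"
      using S(1) rows_sum[OF \<open>k < n\<close>] by (simp add: sum.If_cases Int_absorb1)
    finally show "(transpose_mat A *\<^sub>v v) $ k = 0\<^sub>v n $ k"
      using \<open>k < n\<close> by simp
  qed (use A in simp)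
  moreover have "v \<in> carrier_vec n"
    unfolding v_def by simp
  ultimately have "det (transpose_mat A) = 0"
    using det_0_iff_vec_prod_zero[of "transpose_mat A" n] A by auto
  then show ?thesis
    using det_transpose[OF A] by simp
qed

theorem mainTheorem5:
  fixes P Q M n :: nat and \<xi> lam \<mu> :: "nat \<Rightarrow> complex" and \<kappa> \<eta> :: complex
    and a :: "nat \<Rightarrow> nat"
  assumes "0 < Q" and "Q < P"
    and "\<eta> = \<i> * complex_of_real pi * of_nat Q / of_nat P"
    and "n \<ge> P"
    and "Omega_entries_finite \<eta> n lam \<mu>"
    and "\<forall>j<P. a j < n"
    and "inj_on a {..<P}"
    and "\<forall>j<P. sinh (lam (a (Suc j mod P)) - lam (a j) + \<eta>) = 0"
  shows "det (Omega \<eta> M \<xi> \<kappa> n lam \<mu> n lam) = 0"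
proof (rule det_zero_if_rows_sum_zero)
  have "0 < P"
    using assms(1,2) by simp
  fix k
  assume "k < n"
  define \<alpha> where "\<alpha> = a_fun \<eta> M \<xi> (\<mu> k) * (\<Prod>c<n. sinh (lam c - \<mu> k + \<eta>))"
  define \<beta> where "\<beta> = \<kappa> * d_fun M \<xi> (\<mu> k) * (\<Prod>c<n. sinh (lam c - \<mu> k - \<eta>))"
  have "(\<Sum>j<P. t_fun \<eta> (lam (a j)) (\<mu> k)) = 0" "(\<Sum>j<P. t_fun \<eta> (\<mu> k) (lam (a j))) = 0"
    using sum_t_fun_cycle_left[OF \<open>0 < P\<close>, of "\<lambda>j. lam (a j)"]
      sum_t_fun_cycle_right[OF \<open>0 < P\<close>, of "\<lambda>j. lam (a j)"] assms(5,6,8) \<open>k < n\<close>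
    unfolding Omega_entries_finite_def by simp_all
  moreover have "Omega \<eta> M \<xi> \<kappa> n lam \<mu> n lam $$ (a j, k)
      = \<alpha> * t_fun \<eta> (lam (a j)) (\<mu> k) - \<beta> * t_fun \<eta> (\<mu> k) (lam (a j))" if "j < P" for j
    using assms(6) that \<open>k < n\<close> by (simp add: Omega_def \<alpha>_def \<beta>_def algebra_simps)
  ultimately show "(\<Sum>i\<in>a ` {..<P}. Omega \<eta> M \<xi> \<kappa> n lam \<mu> n lam $$ (i, k)) = 0"
    using assms(7) by (simp add: sum.reindex sum_subtractf sum_distrib_left[symmetric])
qed (use assms(1,2,6) in \<open>auto simp: Omega_def\<close>)

end
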